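(* Let $(q(t),p(t))$ be an orbit of $X_H$ in rotating coordinates. If $(q_1+\mu)p_2-q_2p_1>\mu(q_1+\mu)$ along the orbit, then the curve $q(t)$ is retrograde with respect to $e(t)$. If $(q_1+\mu)p_2-q_2p_1<\mu(q_1+\mu)$ along the orbit, then it is direct.
   Context: For $\mu\in[0,1]$, $H(q,p)=\tfrac12|p|^2+q_1p_2-q_2p_1-\frac{1-\mu}{|q+(\mu,0)|}-\frac{\mu}{|q-(1-\mu,0)|}$ on $(\mathbb{R}^2\setminus\{(-\mu,0),(1-\mu,0)\})\times\mathbb{R}^2$, with $\dot q=\partial H/\partial p$, $\dot p=-\partial H/\partial q$. Let $R_t=\begin{pmatrix}\cos t&-\sin t\\ \sin t&\cos t\end{pmatrix}$. Sidereal coordinates are $\bar q(t)=R_{-t}q(t)$, and $\bar e(t)=R_{-t}(-\mu,0)$ (with $e(t)$ the corresponding point $(-\mu,0)$ in rotating coordinates). A path is called retrograde with respect to $e(t)$ if the angle $\phi(t)=\arg\big(\bar q_1(t)-\bar e_1(t)+i(\bar q_2(t)-\bar e_2(t))\big)$ is increasing, and prograde (direct) if it is decreasing. *)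

theory Defs
  imports "HOL-Analysis.Analysis"
begin

text \<open>Points of the plane are pairs of reals (real \<times> real, with its Euclidean
inner product and norm).  The two primaries sit at (-mu,0) and (1-mu,0).\<close>

definition H :: "real \<Rightarrow> real \<times> real \<Rightarrow> real \<times> real \<Rightarrow> real" where
  "H mu q p =
     (fst p ^ 2 + snd p ^ 2) / 2 + fst q * snd p - snd q * fst p
     - (1 - mu) / norm (q + (mu, 0)) - mu / norm (q - (1 - mu, 0))"

text \<open>An orbit of X_H on an interval I: q(t) avoids the primaries and
  dq/dt = dH/dp, dp/dt = - dH/dq (partial gradients w.r.t. the inner product).\<close>
definition is_orbit ::
  "real \<Rightarrow> real set \<Rightarrow> (real \<Rightarrow> real \<times> real) \<Rightarrow> (real \<Rightarrow> real \<times> real) \<Rightarrow> bool" where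
  "is_orbit mu I q p \<longleftrightarrow>
     is_interval I \<and>
     (\<forall>t\<in>I. q t \<noteq> (- mu, 0) \<and> q t \<noteq> (1 - mu, 0) \<and>
        (\<exists>dq dp. (q has_vector_derivative dq) (at t within I) \<and>
                 (p has_vector_derivative dp) (at t within I) \<and>
                 ((\<lambda>v. H mu (q t) v) has_derivative (\<lambda>v. dq \<bullet> v)) (at (p t)) \<and>
                 ((\<lambda>x. H mu x (p t)) has_derivative (\<lambda>v. - (dp \<bullet> v))) (at (q t))))"

definition rot :: "real \<Rightarrow> real \<times> real \<Rightarrow> real \<times> real" where
  "rot t z = (cos t * fst z - sin t * snd z, sin t * fst z + cos t * snd z)"

definition sidereal_q :: "(real \<Rightarrow> real \<times> real) \<Rightarrow> real \<Rightarrow> real \<times> real" where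
  "sidereal_q q t = rot (- t) (q t)"

definition sidereal_e :: "real \<Rightarrow> real \<Rightarrow> real \<times> real" where
  "sidereal_e mu t = rot (- t) (- mu, 0)"

definition is_angle_fn ::
  "real \<Rightarrow> real set \<Rightarrow> (real \<Rightarrow> real \<times> real) \<Rightarrow> (real \<Rightarrow> real) \<Rightarrow> bool" where
  "is_angle_fn mu I q \<phi> \<longleftrightarrow>
     continuous_on I \<phi> \<and>
     (\<forall>t\<in>I. sidereal_q q t - sidereal_e mu t =
        (norm (sidereal_q q t - sidereal_e mu t) * cos (\<phi> t),
         norm (sidereal_q q t - sidereal_e mu t) * sin (\<phi> t)))"

definition retrograde :: "real \<Rightarrow> real set \<Rightarrow> (real \<Rightarrow> real \<times> real) \<Rightarrow> bool" where
  "retrograde mu I q \<longleftrightarrow>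
     (\<exists>\<phi>. is_angle_fn mu I q \<phi> \<and> (\<forall>s\<in>I. \<forall>t\<in>I. s < t \<longrightarrow> \<phi> s < \<phi> t))"

definition prograde :: "real \<Rightarrow> real set \<Rightarrow> (real \<Rightarrow> real \<times> real) \<Rightarrow> bool" where
  "prograde mu I q \<longleftrightarrow>
     (\<exists>\<phi>. is_angle_fn mu I q \<phi> \<and> (\<forall>s\<in>I. \<forall>t\<in>I. s < t \<longrightarrow> \<phi> t < \<phi> s))"

end

theory Submission
  imports Defs
begin

text \<open>Put \<open>z = q - e = (q\<^sub>1 + \<mu>, q\<^sub>2)\<close>. Hamilton's equations give
  \<open>q' = (p\<^sub>1 - q\<^sub>2, p\<^sub>2 + q\<^sub>1)\<close>, and a continuous logarithm of \<open>z\<close>, read as a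
  complex number, yields a continuous polar angle \<open>\<theta>\<close> of \<open>z\<close> on the interval with
  \<open>\<theta>' = (z\<^sub>1 z\<^sub>2' - z\<^sub>2 z\<^sub>1') / |z|\<^sup>2\<close>. Since the sidereal
  difference is \<open>R\<^sub>-\<^sub>t z\<close>, \<open>\<phi> = \<theta> - t\<close> is an angle function for it, and
  \<open>\<phi>' = ((q\<^sub>1 + \<mu>) p\<^sub>2 - q\<^sub>2 p\<^sub>1 - \<mu> (q\<^sub>1 + \<mu>)) / |z|\<^sup>2\<close> has the sign prescribed by
  the hypothesis, so \<open>\<phi>\<close> is strictly monotone by the mean value theorem.\<close>

lemma continuous_logarithm_eventually_eq_Ln:
  fixes w g :: "real \<Rightarrow> complex"
  assumes s: "s \<in> I" and cont_g: "continuous_on I g" and exp_g: "\<And>t. t \<in> I \<Longrightarrow> w t = exp (g t)"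
    and cont_w: "continuous (at s within I) w" and nz: "w s \<noteq> 0"
  obtains d where "d > 0" and "\<And>t. t \<in> I \<Longrightarrow> dist t s < d \<Longrightarrow> g t = g s + Ln (w t / w s)"
proof -
  have "((\<lambda>t. Ln (w t / w s)) \<longlongrightarrow> Ln (w s / w s)) (at s within I)"
    using cont_w nz by (intro tendsto_intros) (auto simp: continuous_within)
  then have "((\<lambda>t. Ln (w t / w s)) \<longlongrightarrow> 0) (at s within I)"
    using nz by simp
  moreover have "((\<lambda>t. g t - g s) \<longlongrightarrow> 0) (at s within I)"
    using cont_g s by (simp add: LIM_zero continuous_on_eq_continuous_within continuous_within)
  ultimately have "\<forall>\<^sub>F t in at s within I. norm (Ln (w t / w s)) < 1 \<and> norm (g t - g s) < 1"
    by (auto dest!: tendstoD[where e = 1] intro: eventually_conj)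
  then obtain d where d: "d > 0" and near: "\<And>t. t \<in> I \<Longrightarrow> t \<noteq> s \<Longrightarrow> dist t s < d \<Longrightarrow>
      norm (Ln (w t / w s)) < 1 \<and> norm (g t - g s) < 1"
    unfolding eventually_at by blast
  have Ln_eq: "g t = g s + Ln (w t / w s)" if t: "t \<in> I" "t \<noteq> s" "dist t s < d" for t
  proof -
    have "w t \<noteq> 0"
      using exp_g t by (metis exp_not_eq_zero)
    then have "exp (g t) = exp (g s + Ln (w t / w s))"
      using exp_g s t nz by (simp add: exp_add)
    then obtain n :: int where "g t = g s + Ln (w t / w s) + of_int (2 * n) * pi * \<i>"
      using exp_eq by blast
    then have n: "g t - g s - Ln (w t / w s) = of_int (2 * n) * pi * \<i>"
      by simp
    \<comment> \<open>two logarithms of \<open>w t\<close> within \<open>1\<close> of \<open>g s\<close> differ by less than \<open>2 < 2 * pi\<close>\<close>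
    have "2 * \<bar>real_of_int n\<bar> * pi = norm (g t - g s - Ln (w t / w s))"
      by (simp add: n norm_mult abs_mult)
    also have "\<dots> \<le> norm (g t - g s) + norm (Ln (w t / w s))"
      by (rule norm_triangle_ineq4)
    also have "\<dots> < 2"
      using near[OF t] by simp
    finally have "\<bar>real_of_int n\<bar> * pi < 1"
      by simp
    moreover have "\<bar>real_of_int n\<bar> \<le> \<bar>real_of_int n\<bar> * pi"
      using pi_gt3 by (simp add: mult_le_cancel_left1)
    ultimately have "n = 0"
      by linarith
    then show ?thesis
      using n by (simp add: algebra_simps)
  qed
  show ?thesis
  proof (rule that[OF d])
    fix t assume "t \<in> I" "dist t s < d"
    then show "g t = g s + Ln (w t / w s)"
      using Ln_eq nz by (cases "t = s") simp_all
  qed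
qed

lemma continuous_logarithm_has_vector_derivative:
  fixes w g :: "real \<Rightarrow> complex"
  assumes s: "s \<in> I" and cont_g: "continuous_on I g" and exp_g: "\<And>t. t \<in> I \<Longrightarrow> w t = exp (g t)"
    and w': "(w has_vector_derivative w') (at s within I)" and nz: "w s \<noteq> 0"
  shows "(g has_vector_derivative w' / w s) (at s within I)"
proof -
  obtain d where d: "d > 0" and Ln_eq: "\<And>t. t \<in> I \<Longrightarrow> dist t s < d \<Longrightarrow> g t = g s + Ln (w t / w s)"
    using continuous_logarithm_eventually_eq_Ln[OF s cont_g exp_g _ nz]
      has_vector_derivative_continuous[OF w'] by blast
  have "((\<lambda>t. w t / w s) has_vector_derivative w' / w s) (at s within I)"
    using w' by (rule has_vector_derivative_divide)
  moreover have "(Ln has_field_derivative 1) (at (w s / w s) within (\<lambda>t. w t / w s) ` I)"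
    using nz by (auto intro: has_field_derivative_at_within has_field_derivative_Ln[of 1, simplified])
  ultimately have "((Ln \<circ> (\<lambda>t. w t / w s)) has_vector_derivative w' / w s * 1) (at s within I)"
    by (rule field_vector_diff_chain_within)
  then have "((\<lambda>t. g s + Ln (w t / w s)) has_vector_derivative w' / w s) (at s within I)"
    by (subst add.commute) (simp add: has_vector_derivative_add_const o_def)
  then show ?thesis
    by (rule has_vector_derivative_transform_within[OF _ d s]) (simp add: Ln_eq)
qed

lemma bounded_linear_Complex_pair: "bounded_linear (\<lambda>v :: real \<times> real. Complex (fst v) (snd v))"
  by (rule bounded_linear_intro[where K = 1]) (auto simp: norm_complex_def norm_prod_def complex_eq_iff)

lemma continuous_polar_angle_has_derivative:
  fixes z dz :: "real \<Rightarrow> real \<times> real"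
  assumes I: "is_interval I"
    and z': "\<And>t. t \<in> I \<Longrightarrow> (z has_vector_derivative dz t) (at t within I)"
    and nz: "\<And>t. t \<in> I \<Longrightarrow> z t \<noteq> 0"
  obtains \<theta> where "continuous_on I \<theta>"
    and "\<And>t. t \<in> I \<Longrightarrow> z t = (norm (z t) * cos (\<theta> t), norm (z t) * sin (\<theta> t))"
    and "\<And>t. t \<in> I \<Longrightarrow> (\<theta> has_real_derivative
           (fst (z t) * snd (dz t) - snd (z t) * fst (dz t)) / (norm (z t))\<^sup>2) (at t within I)"
proof -
  define c :: "real \<times> real \<Rightarrow> complex" where "c v = Complex (fst v) (snd v)" for v
  define w where "w t = c (z t)" for t
  have w': "(w has_vector_derivative c (dz t)) (at t within I)" if "t \<in> I" for t
    unfolding w_def c_def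
    by (rule bounded_linear.has_vector_derivative[OF bounded_linear_Complex_pair z'[OF that]])
  have w_nz: "w t \<noteq> 0" if "t \<in> I" for t
    using nz[OF that] by (auto simp: w_def c_def complex_eq_iff prod_eq_iff)
  have norm_w: "norm (w t) = norm (z t)" for t
    by (simp add: w_def c_def norm_complex_def norm_prod_def)
  have "continuous_on I w"
    using w' by (meson continuous_on_eq_continuous_within has_vector_derivative_continuous)
  then obtain g where cont_g: "continuous_on I g" and exp_g: "\<And>t. t \<in> I \<Longrightarrow> w t = exp (g t)"
    using continuous_logarithm_on_contractible convex_imp_contractible is_interval_convex I w_nz
    by metis
  show ?thesis
  proof (rule that[of "\<lambda>t. Im (g t)"])
    show "continuous_on I (\<lambda>t. Im (g t))"
      by (intro continuous_intros cont_g)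
  next
    fix t assume t: "t \<in> I"
    have "norm (z t) = exp (Re (g t))"
      using norm_w[of t] exp_g[OF t] by simp
    moreover have "fst (z t) = Re (w t)" "snd (z t) = Im (w t)"
      by (simp_all add: w_def c_def)
    ultimately show "z t = (norm (z t) * cos (Im (g t)), norm (z t) * sin (Im (g t)))"
      using exp_g[OF t] by (simp add: prod_eq_iff Re_exp Im_exp)
  next
    fix t assume t: "t \<in> I"
    have "(g has_vector_derivative c (dz t) / w t) (at t within I)"
      using continuous_logarithm_has_vector_derivative[OF t cont_g exp_g w'[OF t] w_nz[OF t]] .
    then have "((\<lambda>t. Im (g t)) has_real_derivative Im (c (dz t) / w t)) (at t within I)"
      by (rule has_field_derivative_Im)
    then show "((\<lambda>t. Im (g t)) has_real_derivative
        (fst (z t) * snd (dz t) - snd (z t) * fst (dz t)) / (norm (z t))\<^sup>2) (at t within I)"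
      by (simp add: Im_divide' norm_w) (simp add: w_def c_def algebra_simps)
  qed
qed

lemma DERIV_pos_imp_increasing_on_interval:
  fixes f f' :: "real \<Rightarrow> real"
  assumes I: "is_interval I"
    and f': "\<And>t. t \<in> I \<Longrightarrow> (f has_real_derivative f' t) (at t within I)"
    and pos: "\<And>t. t \<in> I \<Longrightarrow> f' t > 0"
    and s: "s \<in> I" and t: "t \<in> I" and "s < t"
  shows "f s < f t"
proof -
  have sub: "{s..t} \<subseteq> I"
    using I s t unfolding is_interval_1 by (meson atLeastAtMost_iff subsetI)
  have "\<exists>x\<in>{s<..<t}. f t - f s = f' x * (t - s)"
  proof (rule mvt_simple[OF \<open>s < t\<close>])
    fix x assume "s \<le> x" "x \<le> t"
    then have "x \<in> I"
      using sub by auto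
    then have "(f has_real_derivative f' x) (at x within {s..t})"
      using has_field_derivative_subset[OF f' sub] by blast
    then show "(f has_derivative (\<lambda>h. f' x * h)) (at x within {s..t})"
      by (simp add: has_field_derivative_def)
  qed
  then obtain x where "x \<in> {s<..<t}" and "f t - f s = f' x * (t - s)"
    by blast
  moreover have "f' x * (t - s) > 0"
    using pos sub \<open>x \<in> {s<..<t}\<close> \<open>s < t\<close> by (simp add: subset_iff)
  ultimately show ?thesis
    by linarith
qed

lemma DERIV_neg_imp_decreasing_on_interval:
  fixes f f' :: "real \<Rightarrow> real"
  assumes "is_interval I"
    and f': "\<And>t. t \<in> I \<Longrightarrow> (f has_real_derivative f' t) (at t within I)"
    and neg: "\<And>t. t \<in> I \<Longrightarrow> f' t < 0"
    and "s \<in> I" "t \<in> I" "s < t"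
  shows "f t < f s"
  using DERIV_pos_imp_increasing_on_interval[of I "\<lambda>t. - f t" "\<lambda>t. - f' t" s t]
    assms DERIV_minus[OF f'] neg by fastforce

lemma H_has_derivative_momentum:
  "((\<lambda>v. H mu q v) has_derivative (\<lambda>v. (fst p - snd q) * fst v + (snd p + fst q) * snd v)) (at p)"
  unfolding H_def
  by (rule has_derivative_eq_rhs, (rule derivative_eq_intros | simp)+) (auto simp: fun_eq_iff algebra_simps)

lemma orbit_velocity:
  assumes "is_orbit mu I q p" and t: "t \<in> I"
  shows "(q has_vector_derivative (fst (p t) - snd (q t), snd (p t) + fst (q t))) (at t within I)"
proof -
  obtain dq where q': "(q has_vector_derivative dq) (at t within I)"
    and H': "((\<lambda>v. H mu (q t) v) has_derivative (\<lambda>v. dq \<bullet> v)) (at (p t))"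
    using assms unfolding is_orbit_def by blast
  have "dq \<bullet> v = (fst (p t) - snd (q t)) * fst v + (snd (p t) + fst (q t)) * snd v" for v
    using has_derivative_unique[OF H' H_has_derivative_momentum] by meson
  from this[of "(1, 0)"] this[of "(0, 1)"]
  have "dq = (fst (p t) - snd (q t), snd (p t) + fst (q t))"
    by (simp add: inner_prod_def prod_eq_iff)
  with q' show ?thesis
    by simp
qed

lemma rot_diff: "rot t a - rot t b = rot t (a - b)"
  by (simp add: rot_def algebra_simps)

lemma rot_polar: "rot t (r * cos \<theta>, r * sin \<theta>) = (r * cos (\<theta> + t), r * sin (\<theta> + t))"
  by (simp add: rot_def cos_add sin_add algebra_simps)

lemma norm_polar: "r \<ge> 0 \<Longrightarrow> norm (r * cos \<theta>, r * sin \<theta>) = r"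
  by (simp add: norm_prod_def power_mult_distrib flip: distrib_left)

lemma is_angle_fn_sidereal:
  assumes "continuous_on I \<theta>"
    and polar: "\<And>t. t \<in> I \<Longrightarrow>
      q t + (mu, 0) = (norm (q t + (mu, 0)) * cos (\<theta> t), norm (q t + (mu, 0)) * sin (\<theta> t))"
  shows "is_angle_fn mu I q (\<lambda>t. \<theta> t - t)"
  unfolding is_angle_fn_def
proof (intro conjI ballI)
  show "continuous_on I (\<lambda>t. \<theta> t - t)"
    by (intro continuous_intros assms(1))
next
  fix t assume "t \<in> I"
  define r where "r = norm (q t + (mu, 0))"
  have "sidereal_q q t - sidereal_e mu t = rot (- t) (q t + (mu, 0))"
    unfolding sidereal_q_def sidereal_e_def rot_diff
    by (rule arg_cong[where f = "rot (- t)"]) (simp add: prod_eq_iff)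
  also have "q t + (mu, 0) = (r * cos (\<theta> t), r * sin (\<theta> t))"
    using polar[OF \<open>t \<in> I\<close>] unfolding r_def .
  also have "rot (- t) (r * cos (\<theta> t), r * sin (\<theta> t)) = (r * cos (\<theta> t - t), r * sin (\<theta> t - t))"
    by (simp add: rot_polar)
  finally show "sidereal_q q t - sidereal_e mu t =
      (norm (sidereal_q q t - sidereal_e mu t) * cos (\<theta> t - t),
       norm (sidereal_q q t - sidereal_e mu t) * sin (\<theta> t - t))"
    by (simp add: norm_polar r_def)
qed

lemma orbit_sidereal_angle:
  assumes orbit: "is_orbit mu I q p"
  obtains \<phi> where "is_angle_fn mu I q \<phi>"
    and "\<And>t. t \<in> I \<Longrightarrow> (\<phi> has_real_derivative
           ((fst (q t) + mu) * snd (p t) - snd (q t) * fst (p t) - mu * (fst (q t) + mu))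
           / (norm (q t + (mu, 0)))\<^sup>2) (at t within I)"
proof -
  define z where "z t = q t + (mu, 0)" for t
  define dz where "dz t = (fst (p t) - snd (q t), snd (p t) + fst (q t))" for t
  have I: "is_interval I"
    using orbit by (simp add: is_orbit_def)
  have z': "(z has_vector_derivative dz t) (at t within I)" if "t \<in> I" for t
    unfolding z_def dz_def has_vector_derivative_add_const by (rule orbit_velocity[OF orbit that])
  have z_nz: "z t \<noteq> 0" if "t \<in> I" for t
    using orbit that by (auto simp: is_orbit_def z_def prod_eq_iff)
  obtain \<theta> where cont: "continuous_on I \<theta>"
    and polar: "\<And>t. t \<in> I \<Longrightarrow> z t = (norm (z t) * cos (\<theta> t), norm (z t) * sin (\<theta> t))"
    and \<theta>': "\<And>t. t \<in> I \<Longrightarrow> (\<theta> has_real_derivative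
           (fst (z t) * snd (dz t) - snd (z t) * fst (dz t)) / (norm (z t))\<^sup>2) (at t within I)"
    using continuous_polar_angle_has_derivative[OF I z' z_nz] by blast
  show ?thesis
  proof (rule that[OF is_angle_fn_sidereal[OF cont polar[unfolded z_def]]])
    fix t assume t: "t \<in> I"
    have "fst (z t) * snd (dz t) - snd (z t) * fst (dz t) - (norm (z t))\<^sup>2
        = (fst (q t) + mu) * snd (p t) - snd (q t) * fst (p t) - mu * (fst (q t) + mu)"
      by (simp add: z_def dz_def power2_norm_eq_inner inner_prod_def algebra_simps)
    moreover have "(norm (z t))\<^sup>2 \<noteq> 0"
      using z_nz[OF t] by simp
    ultimately have "(fst (z t) * snd (dz t) - snd (z t) * fst (dz t)) / (norm (z t))\<^sup>2 - 1
        = ((fst (q t) + mu) * snd (p t) - snd (q t) * fst (p t) - mu * (fst (q t) + mu))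
          / (norm (q t + (mu, 0)))\<^sup>2"
      by (metis diff_divide_distrib divide_self z_def)
    then show "((\<lambda>t. \<theta> t - t) has_real_derivative
        ((fst (q t) + mu) * snd (p t) - snd (q t) * fst (p t) - mu * (fst (q t) + mu))
        / (norm (q t + (mu, 0)))\<^sup>2) (at t within I)"
      using DERIV_diff[OF \<theta>'[OF t] DERIV_ident] by simp
  qed
qed

theorem proposition2p1:
  fixes mu :: real and I :: "real set" and q p :: "real \<Rightarrow> real \<times> real"
  assumes "0 \<le> mu" and "mu \<le> 1"
    and "is_orbit mu I q p"
  shows "((\<forall>t\<in>I. (fst (q t) + mu) * snd (p t) - snd (q t) * fst (p t) > mu * (fst (q t) + mu))
           \<longrightarrow> retrograde mu I q) \<and>
         ((\<forall>t\<in>I. (fst (q t) + mu) * snd (p t) - snd (q t) * fst (p t) < mu * (fst (q t) + mu))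
           \<longrightarrow> prograde mu I q)"
proof -
  have I: "is_interval I"
    using assms(3) by (simp add: is_orbit_def)
  have dist_e: "(norm (q t + (mu, 0)))\<^sup>2 > 0" if "t \<in> I" for t
    using assms(3) that by (auto simp: is_orbit_def prod_eq_iff)
  obtain \<phi> where angle: "is_angle_fn mu I q \<phi>"
    and \<phi>': "\<And>t. t \<in> I \<Longrightarrow> (\<phi> has_real_derivative
           ((fst (q t) + mu) * snd (p t) - snd (q t) * fst (p t) - mu * (fst (q t) + mu))
           / (norm (q t + (mu, 0)))\<^sup>2) (at t within I)"
    using orbit_sidereal_angle[OF assms(3)] by blast
  show ?thesis
  proof (intro conjI impI)
    assume above: "\<forall>t\<in>I. (fst (q t) + mu) * snd (p t) - snd (q t) * fst (p t) > mu * (fst (q t) + mu)"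
    have "((fst (q t) + mu) * snd (p t) - snd (q t) * fst (p t) - mu * (fst (q t) + mu))
        / (norm (q t + (mu, 0)))\<^sup>2 > 0" if "t \<in> I" for t
      using above that dist_e[OF that] by simp
    then show "retrograde mu I q"
      unfolding retrograde_def using angle DERIV_pos_imp_increasing_on_interval[OF I \<phi>'] by blast
  next
    assume below: "\<forall>t\<in>I. (fst (q t) + mu) * snd (p t) - snd (q t) * fst (p t) < mu * (fst (q t) + mu)"
    have "((fst (q t) + mu) * snd (p t) - snd (q t) * fst (p t) - mu * (fst (q t) + mu))
        / (norm (q t + (mu, 0)))\<^sup>2 < 0" if "t \<in> I" for t
      using below that dist_e[OF that] by (simp add: divide_neg_pos)
    then show "prograde mu I q"
      unfolding prograde_def using angle DERIV_neg_imp_decreasing_on_interval[OF I \<phi>'] by blast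
  qed
qed

end
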